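(* Let $\mathbb{F}_Q$ be a prime field, $\mathbb{F}_Q^*=\mathbb{F}_Q\setminus\{0\}$, $\sigma,\beta\in\mathbb{N}$, and $H:\{0,1\}^\sigma\to\mathbb{F}_Q$ a function with no collisions on the inputs considered. An optimized OLE tuple is generated by drawing $s_A$ and $s_{B,1},\dots,s_{B,\beta}$ uniformly from $\mathbb{F}_Q$ and $r_{B,1},\dots,r_{B,\beta}$ uniformly from $\mathbb{F}_Q^*$, all independently, and setting $r_{A,j}=(s_A+s_{B,j})/r_{B,j}$ for $j=1,\dots,\beta$ (so $r_{A,j}r_{B,j}=s_A+s_{B,j}$); Alice receives $(s_A,r_{A,1},\dots,r_{A,\beta})$ and Bob receives $((s_{B,1},r_{B,1}),\dots,(s_{B,\beta},r_{B,\beta}))$. Alice holds one element $x\in\{0,1\}^\sigma$ and Bob holds elements $y_1,\dots,y_\beta\in\{0,1\}^\sigma$. In the set comparison protocol, Alice sends $c=s_A-H(x)$ to Bob; Bob sends $d_j=(c+H(y_j)+s_{B,j})/r_{B,j}$ for each $j$ to Alice; Alice learns for each $j$ whether $x=y_j$ by checking $d_j\stackrel{?}{=}r_{A,j}$. Then this set comparison protocol is secure in the semi-honest model: there exist simulators of Bob's view (from $y_1,\dots,y_\beta$ and his OLE share) and of Alice's view (from $x$, her OLE share and her output, namely which $j$ satisfy $x=y_j$) that are identically distributed to the respective real views.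
   Context: Semi-honest security: a party's view consists of its input, its correlated randomness and all messages it receives; a protocol is secure if each party's view can be simulated from that party's input and output alone. All arithmetic is in $\mathbb{F}_Q$. *)

theory Defs
  imports "HOL-Probability.Probability_Mass_Function" "Berlekamp_Zassenhaus.Finite_Field"
begin

text \<open>The prime field F_Q is the type 'q mod_ring with 'q :: prime_card (CARD('q) = Q prime).
  Bit strings in {0,1}^sigma are bool lists of length sigma.\<close>

fun iid_list :: "nat \<Rightarrow> 'a pmf \<Rightarrow> 'a list pmf" where
  "iid_list 0 p = return_pmf []"
| "iid_list (Suc n) p = do { x \<leftarrow> p; xs \<leftarrow> iid_list n p; return_pmf (x # xs) }"

definition unif_F :: "'q::prime_card mod_ring pmf" where
  "unif_F = pmf_of_set UNIV"

definition unif_Fstar :: "'q::prime_card mod_ring pmf" where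
  "unif_Fstar = pmf_of_set (UNIV - {0})"

definition ole_gen :: "nat \<Rightarrow> ('q::prime_card mod_ring \<times> ('q mod_ring \<times> 'q mod_ring) list) pmf" where
  "ole_gen \<beta> = do {
     sA \<leftarrow> unif_F;
     sBs \<leftarrow> iid_list \<beta> unif_F;
     rBs \<leftarrow> iid_list \<beta> unif_Fstar;
     return_pmf (sA, zip sBs rBs) }"

definition alice_share ::
  "'q::prime_card mod_ring \<times> ('q mod_ring \<times> 'q mod_ring) list \<Rightarrow> 'q mod_ring \<times> 'q mod_ring list" where
  "alice_share ole = (case ole of (sA, bs) \<Rightarrow> (sA, map (\<lambda>(sB, rB). (sA + sB) / rB) bs))"

definition bob_share ::
  "'q::prime_card mod_ring \<times> ('q mod_ring \<times> 'q mod_ring) list \<Rightarrow> ('q mod_ring \<times> 'q mod_ring) list" where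
  "bob_share ole = snd ole"

definition msg_c :: "(bool list \<Rightarrow> 'q::prime_card mod_ring) \<Rightarrow> bool list \<Rightarrow> 'q mod_ring \<Rightarrow> 'q mod_ring" where
  "msg_c H x sA = sA - H x"

definition msgs_d :: "(bool list \<Rightarrow> 'q::prime_card mod_ring) \<Rightarrow> bool list list \<Rightarrow>
    ('q mod_ring \<times> 'q mod_ring) list \<Rightarrow> 'q mod_ring \<Rightarrow> 'q mod_ring list" where
  "msgs_d H ys bs c = map (\<lambda>(y, (sB, rB)). (c + H y + sB) / rB) (zip ys bs)"

definition alice_output :: "bool list \<Rightarrow> bool list list \<Rightarrow> bool list" where
  "alice_output x ys = map (\<lambda>y. x = y) ys"

definition bob_view :: "(bool list \<Rightarrow> 'q::prime_card mod_ring) \<Rightarrow> nat \<Rightarrow> bool list \<Rightarrow> bool list list \<Rightarrow>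
    (bool list list \<times> ('q mod_ring \<times> 'q mod_ring) list \<times> 'q mod_ring) pmf" where
  "bob_view H \<beta> x ys = map_pmf (\<lambda>ole. (ys, bob_share ole, msg_c H x (fst ole))) (ole_gen \<beta>)"

definition alice_view :: "(bool list \<Rightarrow> 'q::prime_card mod_ring) \<Rightarrow> nat \<Rightarrow> bool list \<Rightarrow> bool list list \<Rightarrow>
    (bool list \<times> ('q mod_ring \<times> 'q mod_ring list) \<times> 'q mod_ring list) pmf" where
  "alice_view H \<beta> x ys = map_pmf (\<lambda>ole. (x, alice_share ole,
       msgs_d H ys (bob_share ole) (msg_c H x (fst ole)))) (ole_gen \<beta>)"

end

theory Submission
  imports Defs
begin

(* Bob only sees c = s_A - H(x), which the uniform s_A masks perfectly and independently of his
   share. On Alice's side, s_{B,j} masks s_A, so r_{A,j} = (s_A + s_{B,j}) / r_{B,j} is uniform and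
   independent of r_{B,j}. Hence d_j = r_{A,j} + (H(y_j) - H(x)) / r_{B,j} is r_{A,j} itself when
   x = y_j, and otherwise r_{A,j} plus a uniform nonzero element independent of Alice's share;
   since the coordinates are independent, her view is simulated coordinatewise from her output. *)

fun seq_pmf :: "'a pmf list \<Rightarrow> 'a list pmf" where
  "seq_pmf [] = return_pmf []"
| "seq_pmf (p # ps) = do { x \<leftarrow> p; xs \<leftarrow> seq_pmf ps; return_pmf (x # xs) }"

lemma iid_list_pair_pmf:
  "iid_list n (pair_pmf p q) =
     map_pmf (\<lambda>(xs, ys). zip xs ys) (pair_pmf (iid_list n p) (iid_list n q))"
proof (induction n)
  case 0
  then show ?case by (simp add: pair_pmf_def bind_return_pmf)
next
  case (Suc n)
  then show ?case
    by (simp add: pair_pmf_def map_bind_pmf bind_assoc_pmf bind_return_pmf)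
       (subst bind_commute_pmf, simp)
qed

lemma iid_list_conditional_map2:
  assumes "\<And>y. y \<in> set ys \<Longrightarrow>
    map_pmf (\<lambda>b. (g b, f y b)) p = bind_pmf (map_pmf g p) (\<lambda>v. map_pmf (Pair v) (k v y))"
  shows "map_pmf (\<lambda>bs. (map g bs, map2 f ys bs)) (iid_list (length ys) p) =
    bind_pmf (iid_list (length ys) p)
      (\<lambda>bs. map_pmf (Pair (map g bs)) (seq_pmf (map2 k (map g bs) ys)))"
  using assms
proof (induction ys)
  case Nil
  then show ?case by (simp add: bind_return_pmf)
next
  case (Cons y ys)
  let ?P = "iid_list (length ys) p"
  let ?S = "\<lambda>bs. seq_pmf (map2 k (map g bs) ys)"
  have head: "map_pmf (\<lambda>b. (g b, f y b)) p = bind_pmf p (\<lambda>b. map_pmf (Pair (g b)) (k (g b) y))"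
    using Cons.prems by (simp add: bind_map_pmf)
  have tail: "map_pmf (\<lambda>bs. (map g bs, map2 f ys bs)) ?P =
      bind_pmf ?P (\<lambda>bs. map_pmf (Pair (map g bs)) (?S bs))"
    using Cons by simp
  have "map_pmf (\<lambda>bs. (map g bs, map2 f (y # ys) bs)) (iid_list (length (y # ys)) p) =
      bind_pmf (map_pmf (\<lambda>b. (g b, f y b)) p) (\<lambda>(v, m).
        map_pmf (\<lambda>(vs, ms). (v # vs, m # ms)) (map_pmf (\<lambda>bs. (map g bs, map2 f ys bs)) ?P))"
    by (simp add: map_pmf_def bind_assoc_pmf bind_return_pmf)
  also have "\<dots> = bind_pmf p (\<lambda>b. bind_pmf (k (g b) y) (\<lambda>m. bind_pmf ?P (\<lambda>bs.
      bind_pmf (?S bs) (\<lambda>ms. return_pmf (g b # map g bs, m # ms)))))"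
    unfolding head tail by (simp add: map_pmf_def bind_assoc_pmf bind_return_pmf)
  also have "\<dots> = bind_pmf p (\<lambda>b. bind_pmf ?P (\<lambda>bs. bind_pmf (k (g b) y) (\<lambda>m.
      bind_pmf (?S bs) (\<lambda>ms. return_pmf (g b # map g bs, m # ms)))))"
    by (subst bind_commute_pmf) (rule refl)
  also have "\<dots> = bind_pmf (iid_list (length (y # ys)) p)
      (\<lambda>bs. map_pmf (Pair (map g bs)) (seq_pmf (map2 k (map g bs) (y # ys))))"
    by (simp add: map_pmf_def bind_assoc_pmf bind_return_pmf)
  finally show ?case .
qed

lemma map_pmf_uniform_add:
  fixes c :: "'a::{finite, group_add}"
  shows "map_pmf (\<lambda>x. x + c) (pmf_of_set UNIV) = pmf_of_set UNIV"
  by (intro map_pmf_of_set_bij_betw bij_betw_byWitness[where f'="\<lambda>x. x - c"]) auto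

lemma map_pmf_uniform_affine:
  fixes a :: "'a::{finite, field}"
  assumes "a \<noteq> 0"
  shows "map_pmf (\<lambda>x. (b + x) / a) (pmf_of_set UNIV) = pmf_of_set UNIV"
  using assms
  by (intro map_pmf_of_set_bij_betw bij_betw_byWitness[where f'="\<lambda>y. y * a - b"]) auto

lemma set_pmf_uniform_nonzero:
  "set_pmf (pmf_of_set (UNIV - {0 :: 'a::{finite, field}})) = UNIV - {0}"
proof (rule set_pmf_of_set)
  show "UNIV - {0 :: 'a} \<noteq> {}"
    using one_neq_zero by blast
qed simp

lemma map_pmf_uniform_nonzero_divide:
  fixes c :: "'a::{finite, field}"
  assumes "c \<noteq> 0"
  shows "map_pmf (\<lambda>r. c / r) (pmf_of_set (UNIV - {0})) = pmf_of_set (UNIV - {0})"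
proof (rule map_pmf_of_set_bij_betw)
  show "bij_betw (\<lambda>r. c / r) (UNIV - {0}) (UNIV - {0})"
    using assms by (intro bij_betw_byWitness[where f'="\<lambda>r. c / r"]) auto
  show "UNIV - {0 :: 'a} \<noteq> {}"
    using one_neq_zero by blast
qed simp

lemma uniform_quotient_independent:
  fixes b :: "'a::{finite, field}"
  shows "map_pmf (\<lambda>(u, r). ((b + u) / r, r)) (pair_pmf (pmf_of_set UNIV) (pmf_of_set (UNIV - {0})))
    = pair_pmf (pmf_of_set UNIV) (pmf_of_set (UNIV - {0}))"
proof -
  let ?U = "pmf_of_set (UNIV :: 'a set)" and ?U\<^sub>0 = "pmf_of_set (UNIV - {0 :: 'a})"
  have "map_pmf (\<lambda>(u, r). ((b + u) / r, r)) (pair_pmf ?U ?U\<^sub>0) =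
      bind_pmf ?U\<^sub>0 (\<lambda>r. bind_pmf (map_pmf (\<lambda>u. (b + u) / r) ?U) (\<lambda>v. return_pmf (v, r)))"
    by (simp add: pair_pmf_def map_bind_pmf bind_map_pmf bind_commute_pmf[of ?U])
  also have "\<dots> = bind_pmf ?U\<^sub>0 (\<lambda>r. bind_pmf ?U (\<lambda>v. return_pmf (v, r)))"
    by (intro bind_pmf_cong refl arg_cong2[where f = bind_pmf] map_pmf_uniform_affine)
       (simp add: set_pmf_uniform_nonzero)
  also have "\<dots> = pair_pmf ?U ?U\<^sub>0"
    by (simp add: pair_pmf_def bind_commute_pmf[of ?U])
  finally show ?thesis .
qed

definition sim_alice_msg :: "'a::{finite, field} \<Rightarrow> bool \<Rightarrow> 'a pmf" where
  "sim_alice_msg v same = (if same then return_pmf v else map_pmf ((+) v) (pmf_of_set (UNIV - {0})))"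

definition sim_alice :: "'a::{finite, field} \<times> 'a list \<Rightarrow> bool list \<Rightarrow> 'a list pmf" where
  "sim_alice share out = seq_pmf (map2 sim_alice_msg (snd share) out)"

lemma map_pmf_quotient_pair_uniform:
  fixes b \<delta> :: "'a::{finite, field}"
  shows "map_pmf (\<lambda>(u, r). ((b + u) / r, (b + u + \<delta>) / r))
      (pair_pmf (pmf_of_set UNIV) (pmf_of_set (UNIV - {0})))
    = bind_pmf (pmf_of_set UNIV) (\<lambda>v. map_pmf (Pair v) (sim_alice_msg v (\<delta> = 0)))"
proof -
  let ?U = "pmf_of_set (UNIV :: 'a set)" and ?U\<^sub>0 = "pmf_of_set (UNIV - {0 :: 'a})"
  have "map_pmf (\<lambda>(u, r). ((b + u) / r, (b + u + \<delta>) / r)) (pair_pmf ?U ?U\<^sub>0) =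
      map_pmf (\<lambda>(v, r). (v, v + \<delta> / r)) (pair_pmf ?U ?U\<^sub>0)"
    by (subst (2) uniform_quotient_independent[symmetric, of b])
       (simp add: pmf.map_comp o_def case_prod_unfold add_divide_distrib)
  also have "\<dots> = map_pmf (\<lambda>(v, e). (v, v + e)) (pair_pmf ?U (map_pmf (\<lambda>r. \<delta> / r) ?U\<^sub>0))"
    by (simp add: pair_map_pmf2 pmf.map_comp o_def case_prod_unfold)
  also have "\<dots> = bind_pmf ?U (\<lambda>v. map_pmf (Pair v) (sim_alice_msg v (\<delta> = 0)))"
  proof (cases "\<delta> = 0")
    case True
    then show ?thesis
      by (simp add: sim_alice_msg_def pair_pmf_def map_pmf_def bind_assoc_pmf bind_return_pmf)
  next
    case False
    then show ?thesis
      unfolding map_pmf_uniform_nonzero_divide[OF False]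
      by (simp add: sim_alice_msg_def pair_pmf_def map_pmf_def bind_assoc_pmf bind_return_pmf)
  qed
  finally show ?thesis .
qed

lemma ole_gen_eq_pair_pmf:
  "ole_gen \<beta> = pair_pmf unif_F (iid_list \<beta> (pair_pmf unif_F unif_Fstar))"
  unfolding ole_gen_def iid_list_pair_pmf
  by (simp add: pair_pmf_def map_pmf_def bind_assoc_pmf bind_return_pmf)

lemma bob_view_simulated:
  "bob_view H \<beta> x ys =
     do { ole \<leftarrow> ole_gen \<beta>; m \<leftarrow> unif_F; return_pmf (ys, bob_share ole, m) }"
proof -
  let ?B = "iid_list \<beta> (pair_pmf unif_F unif_Fstar) :: ('q::prime_card mod_ring \<times> 'q mod_ring) list pmf"
  have "bob_view H \<beta> x ys =
      map_pmf (\<lambda>(m, bs). (ys, bs, m)) (pair_pmf (map_pmf (\<lambda>sA. sA + - H x) unif_F) ?B)"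
    by (simp add: bob_view_def ole_gen_eq_pair_pmf pair_map_pmf1 pmf.map_comp o_def case_prod_beta
        bob_share_def msg_c_def)
  also have "map_pmf (\<lambda>sA. sA + - H x) unif_F = unif_F"
    unfolding unif_F_def by (rule map_pmf_uniform_add)
  also have "map_pmf (\<lambda>(m, bs). (ys, bs, m)) (pair_pmf unif_F ?B) =
      do { ole \<leftarrow> ole_gen \<beta>; m \<leftarrow> unif_F; return_pmf (ys, bob_share ole, m) }"
    by (simp add: ole_gen_eq_pair_pmf pair_pmf_def map_pmf_def bind_assoc_pmf bind_return_pmf
        bob_share_def bind_commute_pmf[of unif_F])
  finally show ?thesis .
qed

lemma alice_view_simulated:
  fixes H :: "bool list \<Rightarrow> 'q::prime_card mod_ring"
  assumes "length ys = \<beta>" and "inj_on H (insert x (set ys))"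
  shows "alice_view H \<beta> x ys =
    do { ole \<leftarrow> ole_gen \<beta>; m \<leftarrow> sim_alice (alice_share ole) (alice_output x ys);
         return_pmf (x, alice_share ole, m) }"
proof -
  let ?P = "pair_pmf unif_F unif_Fstar :: ('q mod_ring \<times> 'q mod_ring) pmf"
  define g :: "'q mod_ring \<Rightarrow> 'q mod_ring \<times> 'q mod_ring \<Rightarrow> 'q mod_ring"
    where "g sA = (\<lambda>(sB, rB). (sA + sB) / rB)" for sA
  have answer: "map_pmf (\<lambda>b. (g sA b, (\<lambda>(sB, rB). (msg_c H x sA + H y + sB) / rB) b)) ?P =
      bind_pmf (map_pmf (g sA) ?P) (\<lambda>v. map_pmf (Pair v) (sim_alice_msg v (x = y)))"
    if "y \<in> set ys" for sA y
  proof -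
    have "(H y - H x = 0) = (x = y)"
      using assms(2) that by (auto simp: inj_on_def)
    moreover have "map_pmf (g sA) ?P = unif_F"
      using arg_cong[OF uniform_quotient_independent[of sA], of "map_pmf fst"]
      by (simp add: g_def unif_F_def unif_Fstar_def pmf.map_comp o_def case_prod_unfold map_fst_pair_pmf)
    ultimately show ?thesis
      using map_pmf_quotient_pair_uniform[of sA "H y - H x"]
      by (simp add: g_def msg_c_def unif_F_def unif_Fstar_def case_prod_unfold algebra_simps)
  qed
  have messages: "map_pmf (\<lambda>bs. (map (g sA) bs, msgs_d H ys bs (msg_c H x sA))) (iid_list \<beta> ?P) =
      bind_pmf (iid_list \<beta> ?P) (\<lambda>bs. map_pmf (Pair (map (g sA) bs))
        (sim_alice (sA, map (g sA) bs) (alice_output x ys)))" for sA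
  proof -
    have "map_pmf (\<lambda>bs. (map (g sA) bs,
          map2 (\<lambda>y (sB, rB). (msg_c H x sA + H y + sB) / rB) ys bs)) (iid_list (length ys) ?P) =
        bind_pmf (iid_list (length ys) ?P) (\<lambda>bs. map_pmf (Pair (map (g sA) bs))
          (seq_pmf (map2 (\<lambda>v y. sim_alice_msg v (x = y)) (map (g sA) bs) ys)))"
      by (rule iid_list_conditional_map2) (rule answer)
    then show ?thesis
      using assms(1)
      by (simp add: msgs_d_def sim_alice_def alice_output_def zip_map2 o_def case_prod_unfold)
  qed
  have "alice_view H \<beta> x ys = bind_pmf unif_F (\<lambda>sA. map_pmf (\<lambda>(rs, ms). (x, (sA, rs), ms))
      (map_pmf (\<lambda>bs. (map (g sA) bs, msgs_d H ys bs (msg_c H x sA))) (iid_list \<beta> ?P)))"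
    by (simp add: alice_view_def ole_gen_eq_pair_pmf alice_share_def bob_share_def g_def
        pair_pmf_def map_pmf_def bind_assoc_pmf bind_return_pmf)
  also have "\<dots> = do { ole \<leftarrow> ole_gen \<beta>; m \<leftarrow> sim_alice (alice_share ole) (alice_output x ys);
      return_pmf (x, alice_share ole, m) }"
    unfolding messages
    by (simp add: ole_gen_eq_pair_pmf alice_share_def g_def
        pair_pmf_def map_pmf_def bind_assoc_pmf bind_return_pmf)
  finally show ?thesis .
qed

theorem theorem3:
  fixes H :: "bool list \<Rightarrow> 'q::prime_card mod_ring" and \<sigma> \<beta> :: nat
  shows "\<exists>(S_B :: bool list list \<Rightarrow> ('q mod_ring \<times> 'q mod_ring) list \<Rightarrow> 'q mod_ring pmf)
          (S_A :: bool list \<Rightarrow> 'q mod_ring \<times> 'q mod_ring list \<Rightarrow> bool list \<Rightarrow> 'q mod_ring list pmf).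
     \<forall>x ys. length x = \<sigma> \<and> length ys = \<beta> \<and> (\<forall>y\<in>set ys. length y = \<sigma>)
        \<and> inj_on H (insert x (set ys)) \<longrightarrow>
       bob_view H \<beta> x ys =
         do { ole \<leftarrow> ole_gen \<beta>; m \<leftarrow> S_B ys (bob_share ole); return_pmf (ys, bob_share ole, m) }
     \<and> alice_view H \<beta> x ys =
         do { ole \<leftarrow> ole_gen \<beta>; m \<leftarrow> S_A x (alice_share ole) (alice_output x ys);
              return_pmf (x, alice_share ole, m) }"
proof (intro exI[of _ "\<lambda>_ _. unif_F"] exI[of _ "\<lambda>_. sim_alice"] allI impI conjI)
  fix x ys
  assume "length x = \<sigma> \<and> length ys = \<beta> \<and> (\<forall>y\<in>set ys. length y = \<sigma>)
    \<and> inj_on H (insert x (set ys))"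
  then show "bob_view H \<beta> x ys =
      do { ole \<leftarrow> ole_gen \<beta>; m \<leftarrow> unif_F; return_pmf (ys, bob_share ole, m) }"
    and "alice_view H \<beta> x ys =
      do { ole \<leftarrow> ole_gen \<beta>; m \<leftarrow> sim_alice (alice_share ole) (alice_output x ys);
           return_pmf (x, alice_share ole, m) }"
    by (simp_all add: bob_view_simulated alice_view_simulated)
qed

end
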